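(* In the standing setup, assume $A$ is generic and $\det f_0'(x)$ is not identically zero. Then for all $x\in\mathbb R^6$ and $\varepsilon\in\mathbb R$, $$\det(I-\varepsilon f_0'(x))=s_1(x,\varepsilon)s_2(x,\varepsilon)s_3(x,\varepsilon),$$ where $s_1=1-2\varepsilon^2(q_2+q_3)$, $s_2=1-2\varepsilon^2(q_1+q_3)$, $s_3=1-2\varepsilon^2(q_1+q_2)$.
   Context: Standing setup: $J=\begin{pmatrix}0&I_3\\-I_3&0\end{pmatrix}$ ($6\times6$). $A$ is a fixed real $6\times 6$ skew-Hamiltonian matrix ($A^{\rm T}J=JA$). $H_0$ is a homogeneous cubic polynomial on $\mathbb R^6$ with $A\nabla^2H_0(x)=\nabla^2H_0(x)A^{\rm T}$ for all $x$ ($\nabla^2$ = Hesse matrix), $f_0=J\nabla H_0$, with Jacobi matrix $f_0'$. Genericity: the characteristic polynomial of $A$ (a square of a cubic) has three pairwise distinct roots $\lambda_1,\lambda_2,\lambda_3$, each a double eigenvalue. $B_i=\alpha_iI+\beta_iA+\gamma_iA^2$ ($i=1,2,3$), where $\alpha_i+\beta_i\lambda+\gamma_i\lambda^2$ is the unique polynomial of degree $\le2$ equal to $-1$ at $\lambda_i$ and to $1$ at the other two eigenvalues. $q_i(x)=\tfrac18\operatorname{tr}(B_i^{\rm T}(f_0'(x))^2)$. *)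

theory Defs
  imports "HOL-Analysis.Analysis"
begin

text \<open>Vectors in R^6 are real^6; indices of the numeral type 6 are of_nat 0, ..., of_nat 5.
  The standard symplectic matrix J = [[0, I3], [-I3, 0]].\<close>
definition Jsymp :: "real^6^6" where
  "Jsymp = (\<chi> i j. if (\<exists>k<3. i = of_nat k \<and> j = of_nat (k + 3)) then 1
                  else if (\<exists>k<3. i = of_nat (k + 3) \<and> j = of_nat k) then -1 else 0)"

definition grad :: "(real^'n \<Rightarrow> real) \<Rightarrow> real^'n \<Rightarrow> real^'n" where
  "grad H x = (\<chi> i. frechet_derivative H (at x) (axis i 1))"

definition hessian :: "(real^'n \<Rightarrow> real) \<Rightarrow> real^'n \<Rightarrow> real^'n^'n" where
  "hessian H x = jacobian (grad H) (at x)"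

definition homogeneous_cubic :: "(real^'n \<Rightarrow> real) \<Rightarrow> bool" where
  "homogeneous_cubic H \<longleftrightarrow> (\<exists>c :: 'n \<Rightarrow> 'n \<Rightarrow> 'n \<Rightarrow> real.
      \<forall>x. H x = (\<Sum>i\<in>UNIV. \<Sum>j\<in>UNIV. \<Sum>k\<in>UNIV. c i j k * x$i * x$j * x$k))"

definition cmat :: "real^'n^'m \<Rightarrow> complex^'n^'m" where
  "cmat M = (\<chi> i j. complex_of_real (M$i$j))"

end

theory Submission
  imports Defs
begin

text \<open>Complexify and put \<open>C = A\<^sup>T\<close>. Skew-Hamiltonicity makes \<open>J (C - \<lambda>)\<close> skew-symmetric,
  and the kernel of a skew-symmetric matrix of even size is never one-dimensional; so each
  \<open>\<lambda>\<^sub>i\<close> has a two-dimensional eigenspace and \<open>C = T D T\<^sup>-\<^sup>1\<close> with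
  \<open>D = diag(\<lambda>\<^sub>1,\<lambda>\<^sub>1,\<lambda>\<^sub>2,\<lambda>\<^sub>2,\<lambda>\<^sub>3,\<lambda>\<^sub>3)\<close>. The linearisation \<open>f\<^sub>0' = J S\<close>, with \<open>S\<close> the
  symmetric Hesse matrix, commutes with \<open>C\<close>, so \<open>X = T\<^sup>-\<^sup>1 f\<^sub>0' T\<close> is block diagonal with
  \<open>2\<times>2\<close> blocks \<open>X\<^sub>k\<close>. For every polynomial \<open>p\<close> the matrix \<open>S p(C)\<close> is symmetric, hence
  \<open>tr (J S p(C)) = 0\<close>; with the interpolating polynomials of the \<open>B\<^sub>i\<close>, for which
  \<open>T\<^sup>-\<^sup>1 B\<^sub>i\<^sup>T T = diag(\<plusminus>1)\<close> with \<open>-1\<close> exactly on the \<open>i\<close>-th block, this makes every block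
  traceless. For a traceless \<open>2\<times>2\<close> matrix, \<open>det (I - \<epsilon> X\<^sub>k) = 1 - \<epsilon>\<^sup>2 tr (X\<^sub>k\<^sup>2) / 2\<close>, and the
  same diagonal form of \<open>B\<^sub>i\<^sup>T\<close> expresses the \<open>tr (X\<^sub>k\<^sup>2)\<close> through the \<open>q\<^sub>i\<close>.\<close>

section \<open>Matrix algebra\<close>

lemma matrix_matrix_mult_nth: "(A ** B) $ i $ j = (\<Sum>k\<in>UNIV. A $ i $ k * B $ k $ j)"
  by (simp add: matrix_matrix_mult_def)

lemma matrix_vector_mult_nth: "(A *v x) $ i = (\<Sum>j\<in>UNIV. A $ i $ j * x $ j)"
  by (simp add: matrix_vector_mult_def)

lemma matrix_add_rdistrib: "(A + B) ** C = A ** C + B ** (C :: 'a::semiring_1^_^_)"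
  by (vector matrix_matrix_mult_def sum.distrib[symmetric] field_simps)

lemma matrix_diff_ldistrib: "C ** (A - B) = C ** A - C ** (B :: 'a::ring_1^_^_)"
  by (vector matrix_matrix_mult_def sum_subtractf[symmetric] algebra_simps)

lemma matrix_diff_rdistrib: "(A - B) ** C = A ** C - B ** (C :: 'a::ring_1^_^_)"
  by (vector matrix_matrix_mult_def sum_subtractf[symmetric] algebra_simps)

lemma matrix_mult_uminus_left: "(- A) ** B = - (A ** B :: 'a::ring_1^_^_)"
  by (vector matrix_matrix_mult_def sum_negf[symmetric])

lemma matrix_mult_uminus_right: "A ** (- B) = - (A ** B :: 'a::ring_1^_^_)"
  by (vector matrix_matrix_mult_def sum_negf[symmetric])

lemma matrix_vector_mult_uminus_left: "(- A) *v x = - (A *v x :: 'a::ring_1^_)"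
  by (simp add: vec_eq_iff matrix_vector_mult_def sum_negf)

lemma transpose_add: "transpose (A + B) = transpose A + transpose B"
  by (vector transpose_def)

lemma transpose_diff: "transpose (A - B) = transpose A - transpose B"
  by (vector transpose_def)

lemma trace_transpose: "trace (transpose A) = trace A"
  by (simp add: trace_def transpose_def)

lemma trace_uminus: "trace (- A) = - trace (A :: 'a::ring_1^'n^'n)"
  by (simp add: trace_def sum_negf)

lemma det_uminus: "det (- A) = (-1) ^ CARD('n) * det (A :: 'a::comm_ring_1^'n^'n)"
proof -
  have "- A = (\<chi> i. (-1) *s A $ i)"
    by (simp add: vec_eq_iff)
  then show ?thesis
    using det_rows_mul[of "\<lambda>_. -1" "\<lambda>i. A $ i"] by simp
qed

lemma det_eq_0_iff_kernel:
  fixes A :: "'a::field^'n^'n"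
  shows "det A = 0 \<longleftrightarrow> (\<exists>x. x \<noteq> 0 \<and> A *v x = 0)"
proof -
  have "det A \<noteq> 0 \<longleftrightarrow> inj ((*v) A)"
    using det_nz_iff_inj_gen[of "(*v) A"] by simp
  also have "\<dots> \<longleftrightarrow> (\<forall>x. A *v x = 0 \<longrightarrow> x = 0)"
  proof
    assume "inj ((*v) A)"
    then show "\<forall>x. A *v x = 0 \<longrightarrow> x = 0"
      by (metis injD matrix_vector_mult_0_right)
  next
    assume kernel: "\<forall>x. A *v x = 0 \<longrightarrow> x = 0"
    show "inj ((*v) A)"
    proof (rule injI)
      fix x y
      assume "A *v x = A *v y"
      then have "A *v (x - y) = 0"
        by (simp add: matrix_vector_mult_diff_distrib)
      then show "x = y"
        using kernel by auto
    qed
  qed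
  finally show ?thesis by blast
qed

lemma trace_skew_symmetric_mult_symmetric:
  fixes K Y :: "'a::field_char_0^'n^'n"
  assumes "transpose K = - K" and "transpose Y = Y"
  shows "trace (K ** Y) = 0"
proof -
  have "trace (K ** Y) = trace (transpose (K ** Y))"
    by (simp add: trace_transpose)
  also have "\<dots> = trace (Y ** (- K))"
    using assms by (simp only: matrix_transpose_mul)
  also have "\<dots> = - trace (Y ** K)"
    by (simp only: matrix_mult_uminus_right trace_uminus)
  also have "\<dots> = - trace (K ** Y)"
    using trace_mul_sym[of Y K] by simp
  finally show ?thesis by simp
qed

definition diag_mat :: "('n \<Rightarrow> 'a::zero) \<Rightarrow> 'a^'n^'n" where
  "diag_mat d = (\<chi> i j. if i = j then d i else 0)"

lemma mat_eq_diag_mat: "mat c = diag_mat (\<lambda>_. c)"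
  by (simp add: mat_def diag_mat_def)

lemma diag_mat_mult_left: "diag_mat d ** (A :: 'a::semiring_1^'n^'m) = (\<chi> i j. d i * A $ i $ j)"
  by (simp add: vec_eq_iff matrix_matrix_mult_def diag_mat_def if_distrib if_distribR
      sum.delta cong: if_cong)

lemma diag_mat_mult_right: "(A :: 'a::semiring_1^'n^'m) ** diag_mat d = (\<chi> i j. A $ i $ j * d j)"
  by (simp add: vec_eq_iff matrix_matrix_mult_def diag_mat_def if_distrib if_distribR
      sum.delta' cong: if_cong)

lemma diag_mat_mult_diag_mat:
  "diag_mat a ** diag_mat b = diag_mat (\<lambda>i. a i * b i :: 'a::semiring_1)"
  unfolding diag_mat_mult_left by (simp add: vec_eq_iff diag_mat_def)

lemma diag_mat_add: "diag_mat a + diag_mat b = diag_mat (\<lambda>i. a i + b i :: 'a::monoid_add)"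
  by (simp add: vec_eq_iff diag_mat_def)

lemma trace_diag_mat_mult:
  "trace (diag_mat d ** (A :: 'a::semiring_1^'n^'n)) = (\<Sum>i\<in>UNIV. d i * A $ i $ i)"
  by (simp add: trace_def diag_mat_mult_left)

lemma mat_mult_commute: "mat c ** A = A ** mat (c :: 'a::comm_semiring_1)"
  by (simp add: mat_eq_diag_mat diag_mat_mult_left diag_mat_mult_right mult.commute)

lemma mat_mult_left_commute: "A ** (mat c ** B) = mat c ** (A ** B :: 'a::comm_semiring_1^_^_)"
  by (metis mat_mult_commute matrix_mul_assoc)

lemma mat_matrix_vector_mult: "mat c *v x = c *s (x :: 'a::semiring_1^'n)"
  by (simp add: vec_eq_iff matrix_vector_mult_def mat_def if_distrib if_distribR sum.delta
      cong: if_cong)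

lemma diag_mat_commute_nth_eq_0:
  fixes X :: "'a::idom^'n^'n"
  assumes "X ** diag_mat d = diag_mat d ** X" and "d i \<noteq> d j"
  shows "X $ i $ j = 0"
proof -
  have "X $ i $ j * d j = d i * X $ i $ j"
    using arg_cong[OF assms(1), of "\<lambda>Y. Y $ i $ j"]
    by (simp add: diag_mat_mult_left diag_mat_mult_right)
  then have "X $ i $ j * (d j - d i) = 0"
    by (simp add: algebra_simps)
  then show ?thesis
    using assms(2) by simp
qed

lemma similar_mult:
  assumes "T ** Ti = mat 1"
  shows "Ti ** (X ** Y) ** T = (Ti ** X ** T) ** (Ti ** Y ** T)"
proof -
  have "(Ti ** X ** T) ** (Ti ** Y ** T) = Ti ** X ** (T ** Ti) ** Y ** T"
    by (simp only: matrix_mul_assoc)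
  then show ?thesis
    using assms by (simp add: matrix_mul_assoc)
qed

lemma similar_add: "Ti ** (X + Y) ** T = Ti ** X ** T + Ti ** Y ** (T :: 'a::semiring_1^'n^'n)"
  by (simp add: matrix_add_ldistrib matrix_add_rdistrib)

lemma similar_diff: "Ti ** (X - Y) ** T = Ti ** X ** T - Ti ** Y ** (T :: 'a::ring_1^'n^'n)"
  by (simp add: matrix_diff_ldistrib matrix_diff_rdistrib)

lemma similar_mat_mult:
  "Ti ** (mat c ** X) ** T = mat c ** (Ti ** X ** (T :: 'a::comm_semiring_1^'n^'n))"
  by (metis mat_mult_left_commute matrix_mul_assoc)

lemma similar_mat:
  fixes T Ti :: "'a::comm_semiring_1^'n^'n"
  assumes "Ti ** T = mat 1"
  shows "Ti ** mat c ** T = mat c"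
proof -
  have "Ti ** mat c ** T = mat c ** (Ti ** T)"
    by (simp only: mat_mult_commute matrix_mul_assoc)
  then show ?thesis
    using assms by simp
qed

lemma trace_similar:
  assumes "T ** Ti = mat 1"
  shows "trace (Ti ** X ** T) = trace (X :: 'a::comm_semiring_1^'n^'n)"
  using assms trace_mul_sym[of "Ti ** X" T] by (simp add: matrix_mul_assoc)

lemma det_similar:
  fixes T Ti X :: "'a::comm_ring_1^'n^'n"
  assumes "Ti ** T = mat 1"
  shows "det (Ti ** X ** T) = det X"
proof -
  have "det Ti * det T = 1"
    using assms det_mul[of Ti T] by simp
  then show ?thesis
    by (simp add: det_mul) (metis mult.commute mult.left_commute mult_1_right)
qed

definition mat_poly2 :: "'a \<Rightarrow> 'a \<Rightarrow> 'a \<Rightarrow> 'a::comm_ring_1^'n^'n \<Rightarrow> 'a^'n^'n" where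
  "mat_poly2 a b c X = mat a + mat b ** X + mat c ** (X ** X)"

lemma transpose_mat_poly2: "transpose (mat_poly2 a b c X) = mat_poly2 a b c (transpose X)"
  by (simp add: mat_poly2_def transpose_add matrix_transpose_mul mat_mult_commute)

lemma similar_mat_poly2:
  fixes T Ti X :: "'a::comm_ring_1^'n^'n"
  assumes "Ti ** T = mat 1" and "T ** Ti = mat 1"
  shows "Ti ** mat_poly2 a b c X ** T = mat_poly2 a b c (Ti ** X ** T)"
  by (simp only: mat_poly2_def similar_add similar_mat_mult similar_mat[OF assms(1)]
      similar_mult[OF assms(2)])

lemma mat_poly2_diag_mat:
  "mat_poly2 a b c (diag_mat d) = diag_mat (\<lambda>i. a + b * d i + c * d i ^ 2)"
  by (simp add: mat_poly2_def mat_eq_diag_mat diag_mat_mult_diag_mat diag_mat_add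
      power2_eq_square)

lemma mat_poly2_intertwine:
  assumes XS: "X ** S = S ** Y"
  shows "mat_poly2 a b c X ** S = S ** mat_poly2 a b c Y"
proof -
  have XXS: "X ** X ** S = S ** (Y ** Y)"
    using XS by (metis matrix_mul_assoc)
  have "mat_poly2 a b c X ** S = mat a ** S + mat b ** (X ** S) + mat c ** (X ** X ** S)"
    by (simp add: mat_poly2_def matrix_add_rdistrib matrix_mul_assoc)
  also have "\<dots> = mat a ** S + mat b ** (S ** Y) + mat c ** (S ** (Y ** Y))"
    by (simp only: XS XXS)
  also have "\<dots> = S ** mat_poly2 a b c Y"
    by (simp add: mat_poly2_def matrix_add_ldistrib mat_mult_left_commute mat_mult_commute[of a])
  finally show ?thesis .
qed

text \<open>\<open>S p(M\<^sup>T)\<close> is symmetric when \<open>M S = S M\<^sup>T\<close>.\<close>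

lemma trace_skew_mult_mat_poly2_eq_0:
  fixes J S M :: "'a::field_char_0^'n^'n"
  assumes "transpose J = - J" and "transpose S = S" and "M ** S = S ** transpose M"
  shows "trace (J ** S ** mat_poly2 a b c (transpose M)) = 0"
proof -
  have "transpose (S ** mat_poly2 a b c (transpose M)) = S ** mat_poly2 a b c (transpose M)"
    using mat_poly2_intertwine[OF assms(3)]
    by (simp add: matrix_transpose_mul transpose_mat_poly2 assms(2))
  then show ?thesis
    using trace_skew_symmetric_mult_symmetric[OF assms(1)] by (simp flip: matrix_mul_assoc)
qed

section \<open>Eigenspaces of skew-Hamiltonian matrices\<close>

lemma not_collinear_lincomb_eq_0:
  fixes u w :: "'a::field^'n"
  assumes "u \<noteq> 0" and "\<forall>c. w \<noteq> c *s u" and "a *s u + b *s w = 0"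
  shows "a = 0 \<and> b = 0"
proof -
  have "b = 0"
  proof (rule ccontr)
    assume "b \<noteq> 0"
    then have "w = (- a / b) *s u"
      using assms(3) by (simp add: vec_eq_iff field_simps add_eq_0_iff)
    then show False
      using assms(2) by blast
  qed
  then show ?thesis
    using assms(1,3) by simp
qed

text \<open>Put a \<open>1\<close> at the diagonal position \<open>k\<close> with \<open>v\<^sub>k \<noteq> 0\<close> and clear the rest of row and
  column \<open>k\<close>: the result \<open>L\<close> is singular, because \<open>L\<^sup>T\<close> is \<open>-L\<close> with row \<open>k\<close> negated and the
  size is even. A kernel vector \<open>y\<close> of \<open>L\<close> has \<open>y\<^sub>k = 0\<close> and is killed by \<open>K\<close> off row \<open>k\<close>;
  row \<open>k\<close> follows from \<open>v\<^sup>T K y = -(K v)\<^sup>T y = 0\<close>.\<close>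

lemma skew_symmetric_kernel_not_collinear:
  fixes K :: "'a::field_char_0^'n^'n"
  assumes skew: "transpose K = - K" and even: "even CARD('n)"
    and Kv: "K *v v = 0" and "v \<noteq> 0"
  shows "\<exists>w. K *v w = 0 \<and> (\<forall>c. w \<noteq> c *s v)"
proof -
  obtain k where vk: "v $ k \<noteq> 0"
    using \<open>v \<noteq> 0\<close> by (metis vec_eq_iff zero_index)
  have K_nth: "K $ j $ i = - K $ i $ j" for i j
    using arg_cong[OF skew, of "\<lambda>A. A $ i $ j"] by (simp add: transpose_def)
  define L :: "'a^'n^'n" where
    "L = (\<chi> i j. if i = k \<or> j = k then (if i = j then 1 else 0) else K $ i $ j)"
  define L' :: "'a^'n^'n" where "L' = (\<chi> i. if i = k then (-1) *s L $ i else L $ i)"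
  have "transpose L $ i $ j = (- L') $ i $ j" for i j
    using K_nth[of i j] by (simp add: transpose_def L_def L'_def)
  then have "transpose L = - L'"
    by (simp add: vec_eq_iff)
  then have "det L = det L'"
    using even by (metis det_transpose det_uminus minus_one_power_iff mult_1)
  moreover have "det L' = - det L"
    unfolding L'_def using det_row_mul[of k "-1" "\<lambda>i. L $ i" "\<lambda>i. L $ i"] by simp
  ultimately have "det L = 0"
    by simp
  then obtain y where "y \<noteq> 0" and Ly: "L *v y = 0"
    using det_eq_0_iff_kernel by blast
  have "(L *v y) $ k = y $ k"
    by (simp add: matrix_vector_mult_nth L_def flip: of_bool_def)
  then have yk: "y $ k = 0"
    using Ly by simp
  have Ky_off: "(K *v y) $ i = 0" if "i \<noteq> k" for i
  proof -
    have "(K *v y) $ i = (L *v y) $ i"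
      unfolding matrix_vector_mult_nth by (rule sum.cong) (use that yk in \<open>auto simp: L_def\<close>)
    then show ?thesis
      using Ly by simp
  qed
  have column: "(\<Sum>i\<in>UNIV. v $ i * K $ i $ j) = - (K *v v) $ j" for j
    unfolding matrix_vector_mult_nth by (simp add: K_nth[of _ j] sum_negf mult.commute)
  have "(\<Sum>i\<in>UNIV. v $ i * (K *v y) $ i) = (\<Sum>j\<in>UNIV. (\<Sum>i\<in>UNIV. v $ i * K $ i $ j) * y $ j)"
    unfolding matrix_vector_mult_nth sum_distrib_left sum_distrib_right
    by (subst sum.swap) (simp add: mult_ac)
  also have "\<dots> = 0"
    using Kv by (simp add: column)
  finally have "(\<Sum>i\<in>UNIV. v $ i * (K *v y) $ i) = 0" .
  moreover have "(\<Sum>i\<in>UNIV. v $ i * (K *v y) $ i) = v $ k * (K *v y) $ k"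
    using Ky_off by (subst sum.remove[of _ k]) auto
  ultimately have "(K *v y) $ k = 0"
    using vk by simp
  with Ky_off have "K *v y = 0"
    by (metis vec_eq_iff zero_index)
  moreover have "y \<noteq> c *s v" for c
    using yk vk \<open>y \<noteq> 0\<close> by auto
  ultimately show ?thesis
    by blast
qed

lemma skew_hamiltonian_eigenvector_pair:
  fixes M J :: "'a::field_char_0^'n^'n"
  assumes even: "even CARD('n)" and skew_ham: "transpose M ** J = J ** M"
    and J_sq: "J ** J = - mat 1" and J_skew: "transpose J = - J"
    and "det (mat l - M) = 0"
  shows "\<exists>u w. transpose M *v u = l *s u \<and> transpose M *v w = l *s w \<and> u \<noteq> 0
    \<and> (\<forall>c. w \<noteq> c *s u)"
proof -
  let ?C = "transpose M"
  have MJ: "M ** J = J ** ?C"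
  proof -
    have "J ** (?C ** J) ** J = J ** (J ** M) ** J"
      using skew_ham by simp
    then have "(J ** ?C) ** (J ** J) = (J ** J) ** (M ** J)"
      by (simp add: matrix_mul_assoc)
    then show ?thesis
      by (simp add: J_sq matrix_mult_uminus_left matrix_mult_uminus_right)
  qed
  have "det (mat l - ?C) = 0"
    using assms(5) by (metis det_transpose transpose_diff transpose_mat)
  then obtain u where "u \<noteq> 0" and "(mat l - ?C) *v u = 0"
    using det_eq_0_iff_kernel by blast
  then have Cu: "?C *v u = l *s u"
    by (simp add: matrix_vector_mult_diff_rdistrib mat_matrix_vector_mult)
  define K where "K = J ** (?C - mat l)"
  have "transpose K = - (M ** J - mat l ** J)"
    by (simp add: K_def matrix_transpose_mul transpose_diff J_skew matrix_mult_uminus_right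
        matrix_diff_rdistrib)
  also have "\<dots> = - K"
    by (simp add: K_def MJ mat_mult_commute matrix_diff_ldistrib)
  finally have K_skew: "transpose K = - K" .
  have "K *v u = 0"
    using Cu by (simp add: K_def matrix_vector_mul_assoc[symmetric]
        matrix_vector_mult_diff_rdistrib mat_matrix_vector_mult)
  then obtain w where Kw: "K *v w = 0" and "\<forall>c. w \<noteq> c *s u"
    using skew_symmetric_kernel_not_collinear[OF K_skew even _ \<open>u \<noteq> 0\<close>] by blast
  have "(J ** J) *v ((?C - mat l) *v w) = J *v (K *v w)"
    by (simp add: K_def matrix_vector_mul_assoc matrix_mul_assoc)
  then have "(?C - mat l) *v w = 0"
    using Kw by (simp add: J_sq matrix_vector_mult_uminus_left)
  then have "?C *v w = l *s w"
    by (simp add: matrix_vector_mult_diff_rdistrib mat_matrix_vector_mult)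
  with Cu \<open>u \<noteq> 0\<close> \<open>\<forall>c. w \<noteq> c *s u\<close> show ?thesis
    by blast
qed

section \<open>Six-dimensional matrices with three double eigenvalues\<close>

lemma UNIV_6: "(UNIV :: 6 set) = {0, 1, 2, 3, 4, 5}"
proof -
  have "x \<in> {0, 1, 2, 3, 4, 5}" for x :: 6
  proof (induct x)
    case (of_int z)
    then have "z = 0 \<or> z = 1 \<or> z = 2 \<or> z = 3 \<or> z = 4 \<or> z = 5"
      by auto
    then show ?case
      by auto
  qed
  then show ?thesis
    by auto
qed

lemma sum_UNIV_6: "sum f (UNIV :: 6 set) = f 0 + f 1 + f 2 + f 3 + f 4 + f 5"
  unfolding UNIV_6 by (subst sum.insert, simp, simp)+ (simp add: add.assoc)

lemma all_6: "(\<forall>i::6. P i) \<longleftrightarrow> P 0 \<and> P 1 \<and> P 2 \<and> P 3 \<and> P 4 \<and> P 5"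
proof -
  have "(\<forall>i::6. P i) \<longleftrightarrow> (\<forall>i\<in>{0, 1, 2, 3, 4, 5}. P i)"
    by (simp add: UNIV_6[symmetric])
  then show ?thesis
    by simp
qed

definition block_of :: "6 \<Rightarrow> nat" where
  "block_of j = (if j = 0 \<or> j = 1 then 1 else if j = 2 \<or> j = 3 then 2 else 3)"

lemma block_of_simps [simp]:
  "block_of 0 = 1" "block_of 1 = 1" "block_of 2 = 2" "block_of 3 = 2" "block_of 4 = 3"
  "block_of 5 = 3"
  by (simp_all add: block_of_def)

lemma block_of_cases: "block_of j = 1 \<or> block_of j = 2 \<or> block_of j = 3"
  by (simp add: block_of_def)

lemma block_of_eq_iff:
  "block_of j = 1 \<longleftrightarrow> j = 0 \<or> j = 1"
  "block_of j = 2 \<longleftrightarrow> j = 2 \<or> j = 3"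
  "block_of j = 3 \<longleftrightarrow> j = 4 \<or> j = 5"
  using UNIV_6 by (auto simp: block_of_def)

lemma eigenvector_matrix_invertible:
  fixes C :: "'a::field^6^6" and V :: "6 \<Rightarrow> 'a^6" and lam :: "nat \<Rightarrow> 'a"
  assumes eig: "\<And>j. C *v V j = lam (block_of j) *s V j"
    and indep: "V 0 \<noteq> 0" "\<forall>c. V 1 \<noteq> c *s V 0" "V 2 \<noteq> 0" "\<forall>c. V 3 \<noteq> c *s V 2"
      "V 4 \<noteq> 0" "\<forall>c. V 5 \<noteq> c *s V 4"
    and distinct: "lam 1 \<noteq> lam 2" "lam 1 \<noteq> lam 3" "lam 2 \<noteq> lam 3"
  shows "invertible (\<chi> r c. V c $ r)"
proof -
  let ?T = "\<chi> r c. V c $ r"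
  have shift: "(C - mat l) *v (\<Sum>c\<in>UNIV. a c *s V c)
      = (\<Sum>c\<in>UNIV. (a c * (lam (block_of c) - l)) *s V c)" for a l
    by (simp add: vec.sum vec.scale matrix_vector_mult_diff_rdistrib mat_matrix_vector_mult eig
        vector_smult_assoc vector_sub_rdistrib algebra_simps)
  have "x = 0" if "?T *v x = 0" for x
  proof -
    have "(\<Sum>c\<in>UNIV. x $ c *s V c) = 0"
      using that by (simp add: vec_eq_iff matrix_vector_mult_nth mult.commute)
    then have "(C - mat l2) *v ((C - mat l1) *v (\<Sum>c\<in>UNIV. x $ c *s V c)) = 0" for l1 l2
      by simp
    then have annihilate:
      "(\<Sum>c\<in>UNIV. (x $ c * (lam (block_of c) - l1) * (lam (block_of c) - l2)) *s V c) = 0"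
      for l1 l2
      by (simp only: shift)
    have "(x $ 0 * ((lam 1 - lam 2) * (lam 1 - lam 3))) *s V 0
        + (x $ 1 * ((lam 1 - lam 2) * (lam 1 - lam 3))) *s V 1 = 0"
      using annihilate[of "lam 2" "lam 3"] by (simp add: sum_UNIV_6 mult.assoc)
    from not_collinear_lincomb_eq_0[OF indep(1,2) this] have block1: "x $ 0 = 0 \<and> x $ 1 = 0"
      using distinct by simp
    have "(x $ 2 * ((lam 2 - lam 1) * (lam 2 - lam 3))) *s V 2
        + (x $ 3 * ((lam 2 - lam 1) * (lam 2 - lam 3))) *s V 3 = 0"
      using annihilate[of "lam 1" "lam 3"] by (simp add: sum_UNIV_6 mult.assoc)
    from not_collinear_lincomb_eq_0[OF indep(3,4) this] have block2: "x $ 2 = 0 \<and> x $ 3 = 0"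
      using distinct by simp
    have "(x $ 4 * ((lam 3 - lam 1) * (lam 3 - lam 2))) *s V 4
        + (x $ 5 * ((lam 3 - lam 1) * (lam 3 - lam 2))) *s V 5 = 0"
      using annihilate[of "lam 1" "lam 2"] by (simp add: sum_UNIV_6 mult.assoc)
    from not_collinear_lincomb_eq_0[OF indep(5,6) this] have block3: "x $ 4 = 0 \<and> x $ 5 = 0"
      using distinct by simp
    show ?thesis
      using block1 block2 block3 by (simp add: vec_eq_iff all_6)
  qed
  then have "det ?T \<noteq> 0"
    using det_eq_0_iff_kernel by blast
  then show ?thesis
    by (simp add: invertible_det_nz)
qed

lemma skew_hamiltonian_diagonalization:
  fixes M J :: "'a::field_char_0^6^6" and lam :: "nat \<Rightarrow> 'a"
  assumes skew_ham: "transpose M ** J = J ** M"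
    and J_sq: "J ** J = - mat 1" and J_skew: "transpose J = - J"
    and distinct: "lam 1 \<noteq> lam 2" "lam 1 \<noteq> lam 3" "lam 2 \<noteq> lam 3"
    and charpoly: "\<And>z. det (mat z - M) = ((z - lam 1) * (z - lam 2) * (z - lam 3)) ^ 2"
  obtains T Ti where "Ti ** T = mat 1" and "T ** Ti = mat 1"
    and "Ti ** transpose M ** T = diag_mat (\<lambda>j. lam (block_of j))"
proof -
  let ?C = "transpose M"
  have "\<exists>u w. ?C *v u = lam i *s u \<and> ?C *v w = lam i *s w \<and> u \<noteq> 0 \<and> (\<forall>c. w \<noteq> c *s u)"
    if "i \<in> {1, 2, 3}" for i
    using that charpoly[of "lam i"]
    by (intro skew_hamiltonian_eigenvector_pair[OF _ skew_ham J_sq J_skew]) auto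
  then obtain u w where eig_u: "\<And>i. i \<in> {1, 2, 3} \<Longrightarrow> ?C *v u i = lam i *s u i"
    and eig_w: "\<And>i. i \<in> {1, 2, 3} \<Longrightarrow> ?C *v w i = lam i *s w i"
    and indep: "\<And>i. i \<in> {1, 2, 3} \<Longrightarrow> u i \<noteq> 0 \<and> (\<forall>c. w i \<noteq> c *s u i)"
    by metis
  define V where "V j = (if j \<in> {0, 2, 4} then u (block_of j) else w (block_of j))" for j :: 6
  have eig: "?C *v V j = lam (block_of j) *s V j" for j
    using block_of_cases[of j] eig_u[of "block_of j"] eig_w[of "block_of j"] by (auto simp: V_def)
  define T where "T = (\<chi> r c. V c $ r)"
  have "invertible T"
    unfolding T_def
    by (rule eigenvector_matrix_invertible[OF eig _ _ _ _ _ _ distinct])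
      (use indep[of 1] indep[of 2] indep[of 3] in \<open>simp_all add: V_def\<close>)
  then obtain Ti where TiT: "Ti ** T = mat 1" and TTi: "T ** Ti = mat 1"
    unfolding invertible_def by blast
  have "(?C ** T) $ r $ c = (?C *v V c) $ r" for r c
    unfolding T_def matrix_matrix_mult_nth matrix_vector_mult_nth by simp
  then have "?C ** T = T ** diag_mat (\<lambda>j. lam (block_of j))"
    by (simp add: vec_eq_iff diag_mat_mult_right eig T_def mult.commute
        del: transpose_matrix_vector)
  then have "Ti ** ?C ** T = diag_mat (\<lambda>j. lam (block_of j))"
    using TiT by (metis matrix_mul_assoc matrix_mul_lid)
  with TiT TTi show thesis
    by (rule that)
qed

definition restrict_rows :: "('n \<Rightarrow> bool) \<Rightarrow> 'a::zero_neq_one^'n^'n \<Rightarrow> 'a^'n^'n" where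
  "restrict_rows P Z = (\<chi> i j. if P i then Z $ i $ j else if i = j then 1 else 0)"

lemma restrict_rows_mult:
  fixes Z :: "'a::comm_ring_1^'n^'n"
  assumes block: "\<And>i k. P i \<Longrightarrow> \<not> P k \<Longrightarrow> Z $ i $ k = 0" and disjoint: "\<And>i. \<not> (P i \<and> Q i)"
  shows "restrict_rows P Z ** restrict_rows Q Z = restrict_rows (\<lambda>i. P i \<or> Q i) Z"
proof -
  have "(\<Sum>k\<in>UNIV. restrict_rows P Z $ i $ k * restrict_rows Q Z $ k $ j)
      = restrict_rows (\<lambda>i. P i \<or> Q i) Z $ i $ j" for i j
  proof (cases "P i")
    case True
    have "(\<Sum>k\<in>UNIV. Z $ i $ k * restrict_rows Q Z $ k $ j)
        = (\<Sum>k\<in>UNIV. if k = j then Z $ i $ j else 0)"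
    proof (rule sum.cong)
      fix k
      show "Z $ i $ k * restrict_rows Q Z $ k $ j = (if k = j then Z $ i $ j else 0)"
        using block[OF True, of k] disjoint[of k] by (cases "P k") (auto simp: restrict_rows_def)
    qed simp
    then show ?thesis
      using True by (simp add: restrict_rows_def)
  next
    case False
    then show ?thesis
      by (simp add: restrict_rows_def flip: of_bool_def)
  qed
  then show ?thesis
    by (simp add: vec_eq_iff matrix_matrix_mult_nth)
qed

lemma det_identity_outside_pair:
  fixes Y :: "'a::comm_ring_1^'n^'n"
  assumes "a \<noteq> b"
    and outside: "\<And>i j. i \<notin> {a, b} \<or> j \<notin> {a, b} \<Longrightarrow> Y $ i $ j = (if i = j then 1 else 0)"
  shows "det Y = Y $ a $ a * Y $ b $ b - Y $ a $ b * Y $ b $ a"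
proof -
  let ?f = "\<lambda>p. of_int (sign p) * (\<Prod>i\<in>UNIV. Y $ i $ p i)"
  let ?swap = "Transposition.transpose a b"
  have "?f p = 0" if "p \<in> {p. p permutes UNIV} - {p. p permutes {a, b}}" for p
  proof -
    from that obtain x where "x \<notin> {a, b}" and "p x \<noteq> x"
      by (auto simp: permutes_def)
    then have "Y $ x $ p x = 0"
      using outside by simp
    then have "(\<Prod>i\<in>UNIV. Y $ i $ p i) = 0"
      by (meson UNIV_I finite prod_zero)
    then show ?thesis
      by simp
  qed
  then have "det Y = sum ?f {p. p permutes {a, b}}"
    unfolding det_def by (intro sum.mono_neutral_right) (auto intro: permutes_subset)
  also have "{p. p permutes {a, b}} = {id, ?swap}"
    by (auto simp: permutes_doubleton_iff)
  also have "sum ?f {id, ?swap} = ?f id + ?f ?swap"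
    using \<open>a \<noteq> b\<close> by (subst sum.insert) (auto simp: fun_eq_iff Transposition.transpose_def)
  also have "(\<Prod>i\<in>UNIV. Y $ i $ g i) = Y $ a $ g a * Y $ b $ g b"
    if "\<And>i. i \<notin> {a, b} \<Longrightarrow> g i = i" for g
  proof -
    have "(\<Prod>i\<in>UNIV. Y $ i $ g i) = (\<Prod>i\<in>{a, b}. Y $ i $ g i)"
      by (rule prod.mono_neutral_right) (use outside that in auto)
    then show ?thesis
      using \<open>a \<noteq> b\<close> by simp
  qed
  then have "?f id + ?f ?swap = Y $ a $ a * Y $ b $ b - Y $ a $ b * Y $ b $ a"
    using \<open>a \<noteq> b\<close> by (simp add: sign_swap_id)
  finally show ?thesis .
qed

lemma det_block_diagonal_6:
  fixes Z :: "'a::comm_ring_1^6^6"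
  assumes block: "\<And>i j. block_of i \<noteq> block_of j \<Longrightarrow> Z $ i $ j = 0"
  shows "det Z = (Z $ 0 $ 0 * Z $ 1 $ 1 - Z $ 0 $ 1 * Z $ 1 $ 0)
    * (Z $ 2 $ 2 * Z $ 3 $ 3 - Z $ 2 $ 3 * Z $ 3 $ 2)
    * (Z $ 4 $ 4 * Z $ 5 $ 5 - Z $ 4 $ 5 * Z $ 5 $ 4)"
proof -
  let ?R = "\<lambda>b. restrict_rows (\<lambda>i. block_of i = b) Z"
  have "?R 1 ** ?R 2 = restrict_rows (\<lambda>i. block_of i = 1 \<or> block_of i = 2) Z"
    by (rule restrict_rows_mult) (auto intro: block)
  then have "?R 1 ** ?R 2 ** ?R 3
      = restrict_rows (\<lambda>i. (block_of i = 1 \<or> block_of i = 2) \<or> block_of i = 3) Z"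
    by (simp only:) (rule restrict_rows_mult, auto intro: block)
  also have "\<dots> = Z"
    using block_of_cases by (simp add: restrict_rows_def vec_eq_iff)
  finally have Z: "Z = ?R 1 ** ?R 2 ** ?R 3" ..
  have det_R: "det (?R b) = Z $ a $ a * Z $ c $ c - Z $ a $ c * Z $ c $ a"
    if "a \<noteq> c" and b_iff: "\<And>i. block_of i = b \<longleftrightarrow> i = a \<or> i = c" for a c b
  proof -
    have "Z $ i $ j = 0" if "i \<in> {a, c}" and "j \<notin> {a, c}" for i j
      using block[of i j] b_iff[of i] b_iff[of j] that by auto
    then show ?thesis
      using \<open>a \<noteq> c\<close> b_iff
      by (subst det_identity_outside_pair[of a c]) (auto simp: restrict_rows_def)
  qed
  have "det (?R 1) = Z $ 0 $ 0 * Z $ 1 $ 1 - Z $ 0 $ 1 * Z $ 1 $ 0"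
    by (rule det_R) (use block_of_eq_iff in auto)
  moreover have "det (?R 2) = Z $ 2 $ 2 * Z $ 3 $ 3 - Z $ 2 $ 3 * Z $ 3 $ 2"
    by (rule det_R) (simp_all add: block_of_eq_iff)
  moreover have "det (?R 3) = Z $ 4 $ 4 * Z $ 5 $ 5 - Z $ 4 $ 5 * Z $ 5 $ 4"
    by (rule det_R) (simp_all add: block_of_eq_iff)
  ultimately show ?thesis
    by (subst Z) (simp only: det_mul)
qed

definition block_sign :: "nat \<Rightarrow> 6 \<Rightarrow> 'a::{one, uminus}" where
  "block_sign i j = (if block_of j = i then -1 else 1)"

definition block_trace :: "'a::comm_ring_1^6^6 \<Rightarrow> nat \<Rightarrow> 'a" where
  "block_trace X k = (\<Sum>j\<in>UNIV. if block_of j = k then X $ j $ j else 0)"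

lemma trace_block_sign_mult: "trace (diag_mat (block_sign i) ** X) = trace X - 2 * block_trace X i"
proof -
  have "block_sign i j * X $ j $ j = X $ j $ j - 2 * (if block_of j = i then X $ j $ j else 0)"
    for j
    by (simp add: block_sign_def)
  then show ?thesis
    unfolding trace_diag_mat_mult
    by (simp add: trace_def block_trace_def sum_subtractf sum_distrib_left)
qed

lemma trace_eq_sum_block_trace: "trace X = block_trace X 1 + block_trace X 2 + block_trace X 3"
  by (simp add: trace_def block_trace_def sum_UNIV_6)

lemma det_traceless_blocks_6:
  fixes X :: "'a::field_char_0^6^6"
  assumes block: "\<And>i j. block_of i \<noteq> block_of j \<Longrightarrow> X $ i $ j = 0"
    and traceless: "block_trace X 1 = 0" "block_trace X 2 = 0" "block_trace X 3 = 0"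
  shows "det (mat 1 - mat e ** X) = (1 - e^2 / 2 * block_trace (X ** X) 1)
    * (1 - e^2 / 2 * block_trace (X ** X) 2) * (1 - e^2 / 2 * block_trace (X ** X) 3)"
proof -
  let ?Z = "mat 1 - mat e ** X"
  have Z: "?Z $ i $ j = (if i = j then 1 else 0) - e * X $ i $ j" for i j
    by (simp add: mat_eq_diag_mat diag_mat_mult_left) (simp add: diag_mat_def)
  have pair: "?Z $ a $ a * ?Z $ b $ b - ?Z $ a $ b * ?Z $ b $ a
      = 1 - e^2 / 2 * ((X ** X) $ a $ a + (X ** X) $ b $ b)"
    if "a \<noteq> b" and "X $ b $ b = - X $ a $ a"
      and "(X ** X) $ a $ a = X $ a $ a * X $ a $ a + X $ a $ b * X $ b $ a"
      and "(X ** X) $ b $ b = X $ b $ a * X $ a $ b + X $ b $ b * X $ b $ b" for a b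
    unfolding Z using that by (simp add: field_simps power2_eq_square)
  have diag_sq:
    "(X ** X) $ 0 $ 0 = X $ 0 $ 0 * X $ 0 $ 0 + X $ 0 $ 1 * X $ 1 $ 0"
    "(X ** X) $ 1 $ 1 = X $ 1 $ 0 * X $ 0 $ 1 + X $ 1 $ 1 * X $ 1 $ 1"
    "(X ** X) $ 2 $ 2 = X $ 2 $ 2 * X $ 2 $ 2 + X $ 2 $ 3 * X $ 3 $ 2"
    "(X ** X) $ 3 $ 3 = X $ 3 $ 2 * X $ 2 $ 3 + X $ 3 $ 3 * X $ 3 $ 3"
    "(X ** X) $ 4 $ 4 = X $ 4 $ 4 * X $ 4 $ 4 + X $ 4 $ 5 * X $ 5 $ 4"
    "(X ** X) $ 5 $ 5 = X $ 5 $ 4 * X $ 4 $ 5 + X $ 5 $ 5 * X $ 5 $ 5"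
    by (simp_all add: matrix_matrix_mult_nth sum_UNIV_6 block)
  have opposite: "X $ 1 $ 1 = - X $ 0 $ 0" "X $ 3 $ 3 = - X $ 2 $ 2" "X $ 5 $ 5 = - X $ 4 $ 4"
    using traceless by (simp_all add: block_trace_def sum_UNIV_6 eq_neg_iff_add_eq_0 add.commute)
  have "det ?Z = (?Z $ 0 $ 0 * ?Z $ 1 $ 1 - ?Z $ 0 $ 1 * ?Z $ 1 $ 0)
      * (?Z $ 2 $ 2 * ?Z $ 3 $ 3 - ?Z $ 2 $ 3 * ?Z $ 3 $ 2)
      * (?Z $ 4 $ 4 * ?Z $ 5 $ 5 - ?Z $ 4 $ 5 * ?Z $ 5 $ 4)"
    by (rule det_block_diagonal_6) (subst Z, auto simp: block)
  also have "\<dots> = (1 - e^2 / 2 * ((X ** X) $ 0 $ 0 + (X ** X) $ 1 $ 1))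
      * (1 - e^2 / 2 * ((X ** X) $ 2 $ 2 + (X ** X) $ 3 $ 3))
      * (1 - e^2 / 2 * ((X ** X) $ 4 $ 4 + (X ** X) $ 5 $ 5))"
    using pair[of 0 1] pair[of 2 3] pair[of 4 5] diag_sq opposite by simp
  finally show ?thesis
    by (simp add: block_trace_def sum_UNIV_6)
qed

lemma skew_hamiltonian_block_form:
  fixes M J S :: "'a::field_char_0^6^6" and lam alpha beta gamma :: "nat \<Rightarrow> 'a"
  assumes skew_ham: "transpose M ** J = J ** M"
    and intertwine: "M ** S = S ** transpose M"
    and J_sq: "J ** J = - mat 1" and J_skew: "transpose J = - J"
    and distinct: "lam 1 \<noteq> lam 2" "lam 1 \<noteq> lam 3" "lam 2 \<noteq> lam 3"
    and charpoly: "\<And>z. det (mat z - M) = ((z - lam 1) * (z - lam 2) * (z - lam 3)) ^ 2"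
    and interp: "\<And>i j. i \<in> {1, 2, 3} \<Longrightarrow> j \<in> {1, 2, 3} \<Longrightarrow>
      alpha i + beta i * lam j + gamma i * (lam j)^2 = (if i = j then -1 else 1)"
  obtains T Ti where "Ti ** T = mat 1" and "T ** Ti = mat 1"
    and "\<And>i j. block_of i \<noteq> block_of j \<Longrightarrow> (Ti ** (J ** S) ** T) $ i $ j = 0"
    and "\<And>i. i \<in> {1, 2, 3} \<Longrightarrow>
      Ti ** mat_poly2 (alpha i) (beta i) (gamma i) (transpose M) ** T = diag_mat (block_sign i)"
proof -
  let ?C = "transpose M" and ?D = "diag_mat (\<lambda>j. lam (block_of j))"
  obtain T Ti where TiT: "Ti ** T = mat 1" and TTi: "T ** Ti = mat 1"
    and TiCT: "Ti ** ?C ** T = ?D"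
    using skew_hamiltonian_diagonalization[OF skew_ham J_sq J_skew distinct charpoly] by blast
  have "(J ** S) ** ?C = J ** (M ** S)"
    using intertwine by (simp add: matrix_mul_assoc)
  also have "\<dots> = ?C ** (J ** S)"
    using skew_ham by (simp add: matrix_mul_assoc)
  finally have "Ti ** ((J ** S) ** ?C) ** T = Ti ** (?C ** (J ** S)) ** T"
    by simp
  then have "(Ti ** (J ** S) ** T) ** ?D = ?D ** (Ti ** (J ** S) ** T)"
    by (simp only: similar_mult[OF TTi] TiCT)
  then have block: "(Ti ** (J ** S) ** T) $ i $ j = 0" if "block_of i \<noteq> block_of j" for i j
    by (rule diag_mat_commute_nth_eq_0)
      (use that block_of_cases[of i] block_of_cases[of j] distinct in auto)
  have sign: "Ti ** mat_poly2 (alpha i) (beta i) (gamma i) ?C ** T = diag_mat (block_sign i)"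
    if "i \<in> {1, 2, 3}" for i
  proof -
    have "alpha i + beta i * lam (block_of j) + gamma i * lam (block_of j) ^ 2 = block_sign i j"
      for j
      using interp[OF that, of "block_of j"] block_of_cases[of j] by (auto simp: block_sign_def)
    then show ?thesis
      by (simp add: similar_mat_poly2[OF TiT TTi] TiCT mat_poly2_diag_mat)
  qed
  show thesis
    by (rule that[OF TiT TTi block sign])
qed

theorem det_one_minus_skew_hamiltonian_commutant:
  fixes M J S :: "'a::field_char_0^6^6" and lam alpha beta gamma :: "nat \<Rightarrow> 'a"
  assumes skew_ham: "transpose M ** J = J ** M"
    and intertwine: "M ** S = S ** transpose M" and S_sym: "transpose S = S"
    and J_sq: "J ** J = - mat 1" and J_skew: "transpose J = - J"
    and distinct: "lam 1 \<noteq> lam 2" "lam 1 \<noteq> lam 3" "lam 2 \<noteq> lam 3"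
    and charpoly: "\<And>z. det (mat z - M) = ((z - lam 1) * (z - lam 2) * (z - lam 3)) ^ 2"
    and interp: "\<And>i j. i \<in> {1, 2, 3} \<Longrightarrow> j \<in> {1, 2, 3} \<Longrightarrow>
      alpha i + beta i * lam j + gamma i * (lam j)^2 = (if i = j then -1 else 1)"
  defines "q i \<equiv>
    trace (transpose (mat_poly2 (alpha i) (beta i) (gamma i) M) ** ((J ** S) ** (J ** S))) / 8"
  shows "det (mat 1 - mat e ** (J ** S))
    = (1 - 2 * e^2 * (q 2 + q 3)) * (1 - 2 * e^2 * (q 1 + q 3)) * (1 - 2 * e^2 * (q 1 + q 2))"
proof -
  let ?P = "\<lambda>i. mat_poly2 (alpha i) (beta i) (gamma i) (transpose M)"
  obtain Ti T where TiT: "Ti ** T = mat 1" and TTi: "T ** Ti = mat 1"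
    and block: "\<And>i j. block_of i \<noteq> block_of j \<Longrightarrow> (Ti ** (J ** S) ** T) $ i $ j = 0"
    and sign: "\<And>i. i \<in> {1, 2, 3} \<Longrightarrow> Ti ** ?P i ** T = diag_mat (block_sign i)"
    by (rule skew_hamiltonian_block_form
        [OF skew_ham intertwine J_sq J_skew distinct charpoly interp])
      auto
  define X where "X = Ti ** (J ** S) ** T"
  have "trace X = 0"
    using trace_skew_symmetric_mult_symmetric[OF J_skew S_sym]
    by (simp add: X_def trace_similar[OF TTi])
  moreover have "trace (diag_mat (block_sign i) ** X) = 0" if "i \<in> {1, 2, 3}" for i
  proof -
    have "trace (diag_mat (block_sign i) ** X) = trace ((Ti ** ?P i ** T) ** (Ti ** (J ** S) ** T))"
      by (simp add: X_def sign[OF that])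
    also have "\<dots> = trace (?P i ** (J ** S))"
      by (simp only: trace_similar[OF TTi] flip: similar_mult[OF TTi])
    also have "\<dots> = 0"
      using trace_skew_mult_mat_poly2_eq_0[OF J_skew S_sym intertwine] trace_mul_sym[of "?P i"]
      by metis
    finally show ?thesis .
  qed
  ultimately have traceless: "block_trace X i = 0" if "i \<in> {1, 2, 3}" for i
    using that by (simp add: trace_block_sign_mult)
  have q: "q i = (trace (X ** X) - 2 * block_trace (X ** X) i) / 8" if "i \<in> {1, 2, 3}" for i
  proof -
    have "trace (?P i ** ((J ** S) ** (J ** S)))
        = trace ((Ti ** ?P i ** T) ** ((Ti ** (J ** S) ** T) ** (Ti ** (J ** S) ** T)))"
      by (simp only: trace_similar[OF TTi] flip: similar_mult[OF TTi])
    also have "\<dots> = trace (diag_mat (block_sign i) ** (X ** X))"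
      by (simp add: X_def sign[OF that])
    finally have
      "trace (?P i ** ((J ** S) ** (J ** S))) = trace (diag_mat (block_sign i) ** (X ** X))" .
    then show ?thesis
      by (simp add: q_def transpose_mat_poly2 trace_block_sign_mult)
  qed
  have "Ti ** (mat 1 - mat e ** (J ** S)) ** T = mat 1 - mat e ** X"
    by (simp only: X_def similar_diff similar_mat[OF TiT] similar_mat_mult)
  then have "det (mat 1 - mat e ** (J ** S)) = det (mat 1 - mat e ** X)"
    using det_similar[OF TiT, of "mat 1 - mat e ** (J ** S)"] by simp
  also have "\<dots> = (1 - e^2 / 2 * block_trace (X ** X) 1)
      * (1 - e^2 / 2 * block_trace (X ** X) 2) * (1 - e^2 / 2 * block_trace (X ** X) 3)"
    by (rule det_traceless_blocks_6) (simp_all add: traceless block[folded X_def])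
  finally show ?thesis
    by (simp add: q trace_eq_sum_block_trace[of "X ** X"] field_simps)
qed

section \<open>The Hamiltonian setting\<close>

lemma Jsymp_nth: "Jsymp $ i $ j = (if (i = 0 \<and> j = 3) \<or> (i = 1 \<and> j = 4) \<or> (i = 2 \<and> j = 5) then 1
   else if (i = 3 \<and> j = 0) \<or> (i = 4 \<and> j = 1) \<or> (i = 5 \<and> j = 2) then -1 else 0)"
proof -
  have "(\<exists>k::nat<3. P k) \<longleftrightarrow> P 0 \<or> P 1 \<or> P 2" for P
    by (auto simp: less_Suc_eq numeral_3_eq_3 numeral_2_eq_2)
  then show ?thesis
    unfolding Jsymp_def by simp
qed

lemma transpose_Jsymp: "transpose Jsymp = - Jsymp"
  by (simp add: vec_eq_iff transpose_def Jsymp_nth all_6)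

lemma Jsymp_mult_Jsymp: "Jsymp ** Jsymp = - mat 1"
  by (simp add: vec_eq_iff matrix_matrix_mult_nth sum_UNIV_6 all_6 mat_def Jsymp_nth)

lemma cmat_nth [simp]: "cmat M $ i $ j = complex_of_real (M $ i $ j)"
  by (simp add: cmat_def)

lemma cmat_mult: "cmat (A ** B) = cmat A ** cmat B"
  by (simp add: vec_eq_iff matrix_matrix_mult_def)

lemma cmat_transpose: "cmat (transpose A) = transpose (cmat A)"
  by (simp add: vec_eq_iff transpose_def)

lemma cmat_uminus: "cmat (- A) = - cmat A"
  by (simp add: vec_eq_iff)

lemma cmat_mat: "cmat (mat c) = mat (complex_of_real c)"
  by (simp add: vec_eq_iff mat_def)

lemma of_real_det_one_minus_scaleR:
  "complex_of_real (det (mat 1 - r *\<^sub>R A)) = det (mat 1 - mat (complex_of_real r) ** cmat A)"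
proof -
  have "cmat (mat 1 - r *\<^sub>R A) = mat 1 - mat (complex_of_real r) ** cmat A"
    by (simp add: vec_eq_iff mat_eq_diag_mat diag_mat_mult_left) (simp add: diag_mat_def)
  moreover have "det (cmat B) = complex_of_real (det B)" for B :: "real^'n^'n"
    unfolding det_def by (simp add: of_real_sum of_real_prod)
  ultimately show ?thesis
    by metis
qed

lemma jacobian_matrix_vector_mult:
  fixes g :: "real^'n \<Rightarrow> real^'m" and J :: "real^'m^'k"
  assumes "g differentiable (at x)"
  shows "jacobian (\<lambda>y. J *v g y) (at x) = J ** jacobian g (at x)"
proof -
  let ?g' = "frechet_derivative g (at x)"
  have g': "(g has_derivative ?g') (at x)"
    using assms by (simp add: frechet_derivative_works)
  then have "((\<lambda>y. J *v g y) has_derivative ((*v) J \<circ> ?g')) (at x)"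
    unfolding o_def by (rule bounded_linear.has_derivative[OF matrix_vector_mul_bounded_linear])
  then have "jacobian (\<lambda>y. J *v g y) (at x) = matrix ((*v) J \<circ> ?g')"
    unfolding jacobian_def by (simp flip: frechet_derivative_at)
  also have "\<dots> = J ** jacobian g (at x)"
    unfolding jacobian_def using g' by (simp add: matrix_compose has_derivative_linear)
  finally show ?thesis .
qed

text \<open>The second derivative of \<open>\<Sum> c\<^sub>i\<^sub>j\<^sub>k x\<^sub>i x\<^sub>j x\<^sub>k\<close> in directions \<open>a\<close>, \<open>h\<close> at \<open>y\<close> sums the
  coefficients against all six arrangements of \<open>a, h, y\<close>, hence is symmetric in \<open>a\<close>, \<open>h\<close>.\<close>

lemma homogeneous_cubic_grad:
  fixes H :: "real^'n \<Rightarrow> real"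
  assumes "homogeneous_cubic H"
  shows homogeneous_cubic_grad_differentiable: "grad H differentiable (at x)"
    and homogeneous_cubic_hessian_symmetric: "transpose (hessian H x) = hessian H x"
proof -
  obtain c where H: "H = (\<lambda>x. \<Sum>i\<in>UNIV. \<Sum>j\<in>UNIV. \<Sum>k\<in>UNIV. c i j k * x $ i * x $ j * x $ k)"
    using assms unfolding homogeneous_cubic_def by blast
  have nth: "((\<lambda>x. x $ i) has_derivative (\<lambda>x. x $ i)) F" for i and F :: "(real^'n) filter"
    by (rule bounded_linear_imp_has_derivative) (rule bounded_linear_vec_nth)
  define DH where "DH y h = (\<Sum>i\<in>UNIV. \<Sum>j\<in>UNIV. \<Sum>k\<in>UNIV.
      c i j k * (h $ i * y $ j * y $ k + y $ i * h $ j * y $ k + y $ i * y $ j * h $ k))"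
    for y h :: "real^'n"
  have "(H has_derivative DH y) (at y)" for y
    unfolding H DH_def[abs_def]
    by (intro has_derivative_sum) (auto intro!: derivative_eq_intros nth ext simp: algebra_simps)
  note dH = this
  have grad_nth: "grad H y $ l = DH y (axis l 1)" for y l
    unfolding grad_def using frechet_derivative_at[OF dH[of y]] by simp
  have expansion: "v = (\<Sum>l\<in>UNIV. v $ l *\<^sub>R axis l 1)" for v :: "real^'n"
    by (simp add: vec_eq_iff axis_def if_distrib cong: if_cong)
  have grad: "grad H = (\<lambda>y. \<Sum>l\<in>UNIV. DH y (axis l 1) *\<^sub>R axis l 1)"
    by (rule ext, subst expansion) (simp add: grad_nth)
  define \<Phi> where "\<Phi> y a h = (\<Sum>i\<in>UNIV. \<Sum>j\<in>UNIV. \<Sum>k\<in>UNIV. c i j k *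
      (a $ i * (h $ j * y $ k + y $ j * h $ k) + h $ i * a $ j * y $ k + y $ i * a $ j * h $ k
       + h $ i * y $ j * a $ k + y $ i * h $ j * a $ k))" for y a h :: "real^'n"
  define DG where "DG y h = (\<Sum>l\<in>UNIV. \<Phi> y (axis l 1) h *\<^sub>R (axis l 1 :: real^'n))" for y h
  have DG: "(grad H has_derivative DG y) (at y)" for y
    unfolding grad DG_def[abs_def] DH_def \<Phi>_def
    by (intro has_derivative_sum has_derivative_scaleR_left)
      (auto intro!: derivative_eq_intros nth ext simp: algebra_simps)
  then show "grad H differentiable (at x)"
    by (auto simp: differentiable_def)
  have "hessian H x $ l $ m = \<Phi> x (axis l 1) (axis m 1)" for l m
    unfolding hessian_def jacobian_def frechet_derivative_at[OF DG, symmetric]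
    by (simp add: matrix_def DG_def axis_def if_distrib cong: if_cong)
  moreover have "\<Phi> y a h = \<Phi> y h a" for y a h
    unfolding \<Phi>_def by (intro sum.cong refl) (simp add: algebra_simps)
  ultimately show "transpose (hessian H x) = hessian H x"
    by (simp add: vec_eq_iff transpose_def)
qed

theorem mainTheorem16:
  fixes A :: "real^6^6" and H0 :: "real^6 \<Rightarrow> real"
    and lam alpha beta gamma :: "nat \<Rightarrow> complex"
  assumes skewHam: "transpose A ** Jsymp = Jsymp ** A"
    and cubic: "homogeneous_cubic H0"
    and comm: "\<And>x. A ** hessian H0 x = hessian H0 x ** transpose A"
    and generic_distinct: "lam 1 \<noteq> lam 2" "lam 1 \<noteq> lam 3" "lam 2 \<noteq> lam 3"
    and generic_charpoly: "\<And>z. det (mat z - cmat A)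
                          = ((z - lam 1) * (z - lam 2) * (z - lam 3))^2"
    and interp: "\<And>i j. i \<in> {1,2,3} \<Longrightarrow> j \<in> {1,2,3} \<Longrightarrow>
                   alpha i + beta i * lam j + gamma i * (lam j)^2 = (if i = j then -1 else 1)"
    and nondeg: "\<exists>x. det (jacobian (\<lambda>y. Jsymp *v grad H0 y) (at x)) \<noteq> 0"
  shows "\<forall>(x::real^6) (\<epsilon>::real).
    (let f' = cmat (jacobian (\<lambda>y. Jsymp *v grad H0 y) (at x));
         B = (\<lambda>i. mat (alpha i) + mat (beta i) ** cmat A
                   + mat (gamma i) ** (cmat A ** cmat A));
         q = (\<lambda>i. trace (transpose (B i) ** (f' ** f')) / 8);
         e = complex_of_real \<epsilon>;
         s1 = 1 - 2 * e^2 * (q 2 + q 3);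
         s2 = 1 - 2 * e^2 * (q 1 + q 3);
         s3 = 1 - 2 * e^2 * (q 1 + q 2)
     in complex_of_real (det (mat 1 - \<epsilon> *\<^sub>R jacobian (\<lambda>y. Jsymp *v grad H0 y) (at x)))
        = s1 * s2 * s3)"
proof -
  have f': "jacobian (\<lambda>y. Jsymp *v grad H0 y) (at x) = Jsymp ** hessian H0 x" for x
    unfolding hessian_def
    by (rule jacobian_matrix_vector_mult[OF homogeneous_cubic_grad_differentiable[OF cubic]])
  have skew_ham: "transpose (cmat A) ** cmat Jsymp = cmat Jsymp ** cmat A"
    using arg_cong[OF skewHam, of cmat] by (simp add: cmat_mult cmat_transpose)
  have intertwine: "cmat A ** cmat (hessian H0 x) = cmat (hessian H0 x) ** transpose (cmat A)" for x
    using arg_cong[OF comm[of x], of cmat] by (simp add: cmat_mult cmat_transpose)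
  have S_sym: "transpose (cmat (hessian H0 x)) = cmat (hessian H0 x)" for x
    using homogeneous_cubic_hessian_symmetric[OF cubic, of x] by (simp flip: cmat_transpose)
  have J_sq: "cmat Jsymp ** cmat Jsymp = - mat 1"
    using arg_cong[OF Jsymp_mult_Jsymp, of cmat] by (simp add: cmat_mult cmat_uminus cmat_mat)
  have J_skew: "transpose (cmat Jsymp) = - cmat Jsymp"
    using arg_cong[OF transpose_Jsymp, of cmat] by (simp add: cmat_transpose cmat_uminus)
  note factorization = det_one_minus_skew_hamiltonian_commutant
    [OF skew_ham intertwine S_sym J_sq J_skew generic_distinct generic_charpoly interp]
  show ?thesis
    unfolding Let_def f' cmat_mult of_real_det_one_minus_scaleR
    by (intro allI, subst factorization) (simp_all add: mat_poly2_def)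
qed

end
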